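(* Let $S=(\mathcal{E},\Sigma,X,\mathcal{O})$ be an entity and $e\in\mathcal{E}$. Then $\mathcal{F}(e)=\{F\subseteq\Sigma:\exists A\subseteq O(e),\ F=eig_e(A)\}$ is a closure system on $\Sigma$, i.e. $\emptyset\in\mathcal{F}(e)$, $\Sigma\in\mathcal{F}(e)$, and $\mathcal{F}(e)$ is closed under arbitrary intersections.
   Context: An entity $S=(\mathcal{E},\Sigma,X,\mathcal{O})$ consists of sets $\mathcal{E},\Sigma$ and for each $e\in\mathcal{E},p\in\Sigma$ a nonempty set $O(e,p)$, with $X=\bigcup O(e,p)$; $O(e)=\bigcup_{p\in\Sigma}O(e,p)$. The eigen map $eig_e:\mathcal{P}(O(e))\to\mathcal{P}(\Sigma)$ is defined by $p\in eig_e(A)\iff O(e,p)\subseteq A$. *)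

theory Defs
  imports Main
begin

definition entity :: "'e set \<Rightarrow> 'p set \<Rightarrow> 'x set \<Rightarrow> ('e \<Rightarrow> 'p \<Rightarrow> 'x set) \<Rightarrow> bool" where
  "entity E Sg X Obs \<longleftrightarrow>
     (\<forall>e\<in>E. \<forall>p\<in>Sg. Obs e p \<noteq> {}) \<and> X = (\<Union>e\<in>E. \<Union>p\<in>Sg. Obs e p)"

definition outcomes :: "'p set \<Rightarrow> ('e \<Rightarrow> 'p \<Rightarrow> 'x set) \<Rightarrow> 'e \<Rightarrow> 'x set" where
  "outcomes Sg Obs e = (\<Union>p\<in>Sg. Obs e p)"

definition eig :: "'p set \<Rightarrow> ('e \<Rightarrow> 'p \<Rightarrow> 'x set) \<Rightarrow> 'e \<Rightarrow> 'x set \<Rightarrow> 'p set" where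
  "eig Sg Obs e A = {p \<in> Sg. Obs e p \<subseteq> A}"

definition eigfam :: "'p set \<Rightarrow> ('e \<Rightarrow> 'p \<Rightarrow> 'x set) \<Rightarrow> 'e \<Rightarrow> 'p set set" where
  "eigfam Sg Obs e = {F. \<exists>A. A \<subseteq> outcomes Sg Obs e \<and> F = eig Sg Obs e A}"

end

theory Submission
  imports Defs
begin

text \<open>The eigen map preserves arbitrary intersections, since \<open>O(e,p) \<subseteq> \<Inter>\<A>\<close> holds iff
  \<open>O(e,p) \<subseteq> A\<close> for every \<open>A \<in> \<A>\<close>. Intersecting eigen sets therefore gives the eigen set of
  the intersection (relativised to \<open>O(e)\<close>, so that the empty family yields \<open>eig\<^sub>e(O(e)) = \<Sigma>\<close>).
  The empty set is an eigen set, namely \<open>eig\<^sub>e(\<emptyset>)\<close>, because every \<open>O(e,p)\<close> is nonempty.\<close>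

lemma entity_Obs_nonempty:
  assumes "entity E Sg X Obs" and "e \<in> E" and "p \<in> Sg"
  shows "Obs e p \<noteq> {}"
  using assms unfolding entity_def by blast

lemma eig_Inter: "eig Sg Obs e (\<Inter>\<A>) = Sg \<inter> (\<Inter>A\<in>\<A>. eig Sg Obs e A)"
  unfolding eig_def by blast

lemma eig_outcomes: "eig Sg Obs e (outcomes Sg Obs e) = Sg"
  unfolding eig_def outcomes_def by blast

lemma eig_empty:
  assumes "\<And>p. p \<in> Sg \<Longrightarrow> Obs e p \<noteq> {}"
  shows "eig Sg Obs e {} = {}"
  using assms unfolding eig_def by blast

lemma eigfam_eq_image: "eigfam Sg Obs e = eig Sg Obs e ` Pow (outcomes Sg Obs e)"
  unfolding eigfam_def by blast

lemma eig_outcomes_Inter: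
  "eig Sg Obs e (outcomes Sg Obs e \<inter> \<Inter>\<A>) = Sg \<inter> \<Inter>(eig Sg Obs e ` \<A>)"
  using eig_Inter[of Sg Obs e "insert (outcomes Sg Obs e) \<A>"] by (simp add: eig_outcomes)

theorem mainTheorem10:
  assumes "entity E Sg X Obs" and "e \<in> E"
  shows "{} \<in> eigfam Sg Obs e \<and> Sg \<in> eigfam Sg Obs e \<and>
         (\<forall>G. G \<subseteq> eigfam Sg Obs e \<longrightarrow> Sg \<inter> \<Inter>G \<in> eigfam Sg Obs e)"
proof (intro conjI allI impI)
  have "eig Sg Obs e {} = {}"
    by (rule eig_empty) (rule entity_Obs_nonempty[OF assms])
  then show "{} \<in> eigfam Sg Obs e"
    unfolding eigfam_eq_image by (metis Pow_bottom rev_image_eqI)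
  show "Sg \<in> eigfam Sg Obs e"
    unfolding eigfam_eq_image by (metis eig_outcomes Pow_top rev_image_eqI)
next
  fix G assume "G \<subseteq> eigfam Sg Obs e"
  then obtain \<A> where G: "G = eig Sg Obs e ` \<A>"
    unfolding eigfam_eq_image by (auto simp: subset_image_iff)
  have "Sg \<inter> \<Inter>G = eig Sg Obs e (outcomes Sg Obs e \<inter> \<Inter>\<A>)"
    unfolding G by (simp only: eig_outcomes_Inter)
  then show "Sg \<inter> \<Inter>G \<in> eigfam Sg Obs e"
    unfolding eigfam_eq_image by (intro rev_image_eqI) auto
qed

end
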